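(* Let $\hat H$, $\tilde\tau>0$ and $\Phi$ be as in the context, and let $\alpha,\beta\in\mathbb{R}$ satisfy $|\alpha|+|\beta|<1$. Then every root $w$ of $\Phi(w)=0$ satisfies $\operatorname{Re} w<0$; i.e. the equilibrium is locally asymptotically stable, regardless of the delay kernel and of $\tilde\tau$.
   Context: Let $g:[0,\infty)\to[0,\infty)$ be a probability density with mean $\int_0^\infty t\,g(t)\,dt=1$ (or the Dirac measure at $1$), and let $\hat H(w)=\int_0^\infty g(s)e^{-ws}\,ds$; then $\hat H(0)=1$, $\hat H'(0)=-1$, and $|\hat H(w)|\le 1$ for $\operatorname{Re} w\ge 0$. The delay kernel with mean $\tau>0$ is $h(t)=\tau^{-1}g(t/\tau)$. For a time constant $\bar\tau>0$ put $\tilde\tau=\tau/\bar\tau$. For $\alpha,\beta\in\mathbb{R}$ the (rescaled) characteristic equation of the linearized coupled Wilson–Cowan system is $$\Phi(w):=(w+\tilde\tau)^4-\alpha\,\tilde\tau^2(w+\tilde\tau)^2\hat H(w)^2+\beta\,\tilde\tau^4\hat H(w)^4=0,$$ equivalently $Q(w)^2-\alpha Q(w)+\beta=0$ with $Q(w)=\big(\frac{w+\tilde\tau}{\tilde\tau\hat H(w)}\big)^2$. The equilibrium is locally asymptotically stable iff all roots have negative real part. *)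

theory Defs
  imports "HOL-Analysis.Analysis"
begin

definition mean_one_density :: "(real \<Rightarrow> real) \<Rightarrow> bool" where
  "mean_one_density g \<longleftrightarrow>
     g \<in> borel_measurable lborel \<and>
     (\<forall>s\<ge>0. g s \<ge> 0) \<and>
     set_integrable lborel {0..} g \<and>
     (LINT s:{0..}|lborel. g s) = 1 \<and>
     set_integrable lborel {0..} (\<lambda>s. s * g s) \<and>
     (LINT s:{0..}|lborel. s * g s) = 1"

definition laplace_density :: "(real \<Rightarrow> real) \<Rightarrow> complex \<Rightarrow> complex" where
  "laplace_density g w = (LINT s:{0..}|lborel. complex_of_real (g s) * exp (- (w * complex_of_real s)))"

text \<open>Hhat is the Laplace transform of an admissible kernel: either of a mean-one
  probability density, or of the Dirac measure at 1 (giving exp(-w)).\<close>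
definition admissible_Hhat :: "(complex \<Rightarrow> complex) \<Rightarrow> bool" where
  "admissible_Hhat H \<longleftrightarrow>
     (\<exists>g. mean_one_density g \<and> (\<forall>w. Re w \<ge> 0 \<longrightarrow> H w = laplace_density g w))
     \<or> (\<forall>w. Re w \<ge> 0 \<longrightarrow> H w = exp (- w))"

definition Phi :: "(complex \<Rightarrow> complex) \<Rightarrow> real \<Rightarrow> real \<Rightarrow> real \<Rightarrow> complex \<Rightarrow> complex" where
  "Phi H tt \<alpha> \<beta> w =
     (w + of_real tt) ^ 4
     - of_real \<alpha> * of_real tt ^ 2 * (w + of_real tt) ^ 2 * H w ^ 2
     + of_real \<beta> * of_real tt ^ 4 * H w ^ 4"

end

theory Submission
  imports Defs
begin

text \<open>On the closed right half-plane the kernel transform satisfies \<open>|H w| \<le> 1\<close> while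
  \<open>|w + \<tau>| \<ge> \<tau>\<close>, so in \<open>\<Phi>(w) = a\<^sup>4 - \<alpha> a\<^sup>2 h\<^sup>2 + \<beta> h\<^sup>4\<close> with \<open>a = w + \<tau>\<close>, \<open>h = \<tau> H w\<close>
  the leading term dominates: \<open>|\<alpha> a\<^sup>2 h\<^sup>2 - \<beta> h\<^sup>4| \<le> (|\<alpha>| + |\<beta>|) |a|\<^sup>4 < |a|\<^sup>4\<close>.\<close>

lemma norm_laplace_density_le_1:
  assumes nonneg: "\<And>s. s \<ge> 0 \<Longrightarrow> g s \<ge> 0"
    and integrable: "set_integrable lborel {0..} g"
    and total: "(LINT s:{0..}|lborel. g s) = 1"
    and w: "Re w \<ge> 0"
  shows "norm (laplace_density g w) \<le> 1"
proof -
  define F where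
    "F = (\<lambda>s::real. indicator {0..} s *\<^sub>R (complex_of_real (g s) * exp (- (w * complex_of_real s))))"
  define G where "G = (\<lambda>s::real. indicator {0..} s *\<^sub>R g s)"
  have laplace_eq: "laplace_density g w = integral\<^sup>L lborel F"
    unfolding laplace_density_def F_def set_lebesgue_integral_def by simp
  have G: "integrable lborel G" "integral\<^sup>L lborel G = 1"
    using integrable total unfolding set_integrable_def set_lebesgue_integral_def G_def by simp_all
  have "norm (F s) \<le> G s" for s
  proof (cases "s \<ge> 0")
    case True
    have "norm (exp (- (w * complex_of_real s))) \<le> 1"
      using True w by simp
    then show ?thesis
      using True nonneg[OF True] by (simp add: F_def G_def norm_mult mult_left_le)
  qed (simp add: F_def G_def)
  then have "integrable lborel F \<Longrightarrow> norm (integral\<^sup>L lborel F) \<le> 1"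
    using Bochner_Integration.integral_norm_bound_integral G by metis
  then show ?thesis
    using laplace_eq by (cases "integrable lborel F") (auto simp: not_integrable_integral_eq)
qed

lemma admissible_Hhat_norm_le_1:
  assumes "admissible_Hhat H" "Re w \<ge> 0"
  shows "norm (H w) \<le> 1"
  using assms norm_laplace_density_le_1
  unfolding admissible_Hhat_def mean_one_density_def
  by auto

lemma dominant_quartic_nonzero:
  fixes a h :: complex and \<alpha> \<beta> :: real
  assumes "norm h \<le> norm a" "a \<noteq> 0" "\<bar>\<alpha>\<bar> + \<bar>\<beta>\<bar> < 1"
  shows "a ^ 4 - of_real \<alpha> * a ^ 2 * h ^ 2 + of_real \<beta> * h ^ 4 \<noteq> 0"
proof
  assume "a ^ 4 - of_real \<alpha> * a ^ 2 * h ^ 2 + of_real \<beta> * h ^ 4 = 0"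
  then have "a ^ 4 = of_real \<alpha> * a ^ 2 * h ^ 2 - of_real \<beta> * h ^ 4"
    by (simp add: algebra_simps)
  then have "norm a ^ 4 = norm (of_real \<alpha> * a ^ 2 * h ^ 2 - of_real \<beta> * h ^ 4)"
    by (metis norm_power)
  also have "\<dots> \<le> \<bar>\<alpha>\<bar> * norm a ^ 2 * norm h ^ 2 + \<bar>\<beta>\<bar> * norm h ^ 4"
    by (rule order_trans[OF norm_triangle_ineq4]) (simp add: norm_mult norm_power)
  also have "\<dots> \<le> \<bar>\<alpha>\<bar> * norm a ^ 2 * norm a ^ 2 + \<bar>\<beta>\<bar> * norm a ^ 4"
    using assms(1) by (intro add_mono mult_left_mono power_mono) auto
  also have "\<dots> = (\<bar>\<alpha>\<bar> + \<bar>\<beta>\<bar>) * norm a ^ 4"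
    by algebra
  also have "\<dots> < norm a ^ 4"
    using assms(2,3) by simp
  finally show False by simp
qed

theorem theorem4:
  fixes H :: "complex \<Rightarrow> complex" and tt \<alpha> \<beta> :: real and w :: complex
  assumes "admissible_Hhat H"
    and "tt > 0"
    and "\<bar>\<alpha>\<bar> + \<bar>\<beta>\<bar> < 1"
    and "Phi H tt \<alpha> \<beta> w = 0"
  shows "Re w < 0"
proof (rule ccontr)
  assume "\<not> Re w < 0"
  then have w: "Re w \<ge> 0" by simp
  define a where "a = w + of_real tt"
  define h where "h = of_real tt * H w"
  have "norm h \<le> tt"
    using admissible_Hhat_norm_le_1[OF assms(1) w] assms(2)
    by (simp add: h_def norm_mult mult_left_le)
  also have "tt \<le> Re a" using w by (simp add: a_def)
  also have "\<dots> \<le> norm a" by (rule complex_Re_le_cmod)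
  finally have "norm h \<le> norm a" .
  moreover have "a \<noteq> 0" using w assms(2) by (auto simp: a_def complex_eq_iff)
  moreover have "a ^ 4 - of_real \<alpha> * a ^ 2 * h ^ 2 + of_real \<beta> * h ^ 4 = 0"
    using assms(4) unfolding Phi_def a_def h_def by (simp add: algebra_simps)
  ultimately show False
    using dominant_quartic_nonzero assms(3) by blast
qed

end
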